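(* Let $\mathcal{A}=\mathcal{R}*_K\mathcal{S}*_L\mathcal{T}\in\mathbb{C}^{I_1\times\cdots\times I_N\times J_1\times\cdots\times J_M}$, where $\mathcal{R}\in\mathbb{C}^{I_1\times\cdots\times I_N\times H_1\times\cdots\times H_K}$, $\mathcal{S}\in\mathbb{C}^{H_1\times\cdots\times H_K\times G_1\times\cdots\times G_L}$ and $\mathcal{T}\in\mathbb{C}^{G_1\times\cdots\times G_L\times J_1\times\cdots\times J_M}$, and let $\mathcal{A}_{\pi\dagger}=\mathcal{T}^{\dagger}*_L(\mathcal{R}^{\dagger}*_N\mathcal{A}*_M\mathcal{T}^{\dagger})^{\dagger}*_K\mathcal{R}^{\dagger}$. Consider the factorization of $\mathcal{A}_{\pi\dagger}$ with factors $\mathcal{R}'=\mathcal{T}^{\dagger}$, $\mathcal{S}'=(\mathcal{R}^{\dagger}*_N\mathcal{A}*_M\mathcal{T}^{\dagger})^{\dagger}$, $\mathcal{T}'=\mathcal{R}^{\dagger}$, and the corresponding product Moore–Penrose inverse $(\mathcal{A}_{\pi\dagger})_{\pi\dagger}=\mathcal{T}'^{\dagger}*_K(\mathcal{R}'^{\dagger}*_M\mathcal{A}_{\pi\dagger}*_N\mathcal{T}'^{\dagger})^{\dagger}*_L\mathcal{R}'^{\dagger}=\mathcal{R}*_K(\mathcal{T}*_M\mathcal{A}_{\pi\dagger}*_N\mathcal{R})^{\dagger}*_L\mathcal{T}$. Then $(\mathcal{A}_{\pi\dagger})_{\pi\dagger}=\mathcal{A}$.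
   Context: $\mathbb{C}^{I_1\times\cdots\times I_N}$ denotes the set of complex tensors of order $N$ and dimension $I_1\times\cdots\times I_N$. For $\mathcal{A}\in\mathbb{C}^{I_1\times\cdots\times I_N\times K_1\times\cdots\times K_N}$ and $\mathcal{B}\in\mathbb{C}^{K_1\times\cdots\times K_N\times J_1\times\cdots\times J_M}$, the Einstein product $\mathcal{A}*_N\mathcal{B}$ is defined by $(\mathcal{A}*_N\mathcal{B})_{i_1\dots i_N j_1\dots j_M}=\sum_{k_1,\dots,k_N}a_{i_1\dots i_N k_1\dots k_N}b_{k_1\dots k_N j_1\dots j_M}$; it is associative. $\mathcal{A}^H$ denotes the conjugate transpose. For $\mathcal{A}\in\mathbb{C}^{I_1\times\cdots\times I_N\times J_1\times\cdots\times J_M}$ the Moore–Penrose inverse $\mathcal{A}^{\dagger}$ is the unique $\mathcal{X}\in\mathbb{C}^{J_1\times\cdots\times J_M\times I_1\times\cdots\times I_N}$ with $\mathcal{A}*_M\mathcal{X}*_N\mathcal{A}=\mathcal{A}$, $\mathcal{X}*_N\mathcal{A}*_M\mathcal{X}=\mathcal{X}$, $(\mathcal{A}*_M\mathcal{X})^H=\mathcal{A}*_M\mathcal{X}$, $(\mathcal{X}*_N\mathcal{A})^H=\mathcal{X}*_N\mathcal{A}$ (in particular $(\mathcal{A}^{\dagger})^{\dagger}=\mathcal{A}$). For a tensor $\mathcal{Z}$ with a factorization $\mathcal{Z}=\mathcal{P}*_k\mathcal{Q}*_l\mathcal{U}$, its product Moore–Penrose inverse relative to that factorization is $\mathcal{U}^{\dagger}*_l(\mathcal{P}^{\dagger}*\mathcal{Z}*\mathcal{U}^{\dagger})^{\dagger}*_k\mathcal{P}^{\dagger}$,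 with contractions over the appropriate shared modes. *)

theory Defs
  imports Complex_Main
begin

text \<open>A tensor in C^{D_1 x ... x D_n} is represented by a function on index lists
  (multi-indices, 0-based) that vanishes outside the valid multi-index set of the
  dimension list D = [D_1,...,D_n].\<close>

definition idx :: "nat list \<Rightarrow> nat list set" where
  "idx D = {x. length x = length D \<and> (\<forall>k<length D. x ! k < D ! k)}"

definition tens :: "nat list \<Rightarrow> (nat list \<Rightarrow> complex) set" where
  "tens D = {A. \<forall>x. x \<notin> idx D \<longrightarrow> A x = 0}"

definition ein :: "nat list \<Rightarrow> nat list \<Rightarrow> nat list \<Rightarrow>
    (nat list \<Rightarrow> complex) \<Rightarrow> (nat list \<Rightarrow> complex) \<Rightarrow> (nat list \<Rightarrow> complex)" where
  "ein I K J A B = (\<lambda>x. if x \<in> idx (I @ J)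
      then (\<Sum>k\<in>idx K. A (take (length I) x @ k) * B (k @ drop (length I) x))
      else 0)"

definition ctr :: "nat list \<Rightarrow> nat list \<Rightarrow> (nat list \<Rightarrow> complex) \<Rightarrow> (nat list \<Rightarrow> complex)" where
  "ctr I J A = (\<lambda>x. if x \<in> idx (J @ I)
      then cnj (A (drop (length J) x @ take (length J) x)) else 0)"

definition is_mpinv :: "nat list \<Rightarrow> nat list \<Rightarrow> (nat list \<Rightarrow> complex) \<Rightarrow> (nat list \<Rightarrow> complex) \<Rightarrow> bool" where
  "is_mpinv I J A X \<longleftrightarrow> X \<in> tens (J @ I) \<and>
     ein I I J (ein I J I A X) A = A \<and>
     ein J J I (ein J I J X A) X = X \<and>
     ctr I I (ein I J I A X) = ein I J I A X \<and>
     ctr J J (ein J I J X A) = ein J I J X A"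

definition mpinv :: "nat list \<Rightarrow> nat list \<Rightarrow> (nat list \<Rightarrow> complex) \<Rightarrow> (nat list \<Rightarrow> complex)" where
  "mpinv I J A = (THE X. is_mpinv I J A X)"

text \<open>Product Moore--Penrose inverse of Z in C^{I x J} relative to a factorization
  Z = P *_K Q *_L U with P in C^{I x K}, U in C^{L x J}:
  U^dag *_L (P^dag *_N Z *_M U^dag)^dag *_K P^dag, an element of C^{J x I}.\<close>
definition pmpinv :: "nat list \<Rightarrow> nat list \<Rightarrow> nat list \<Rightarrow> nat list \<Rightarrow>
    (nat list \<Rightarrow> complex) \<Rightarrow> (nat list \<Rightarrow> complex) \<Rightarrow> (nat list \<Rightarrow> complex) \<Rightarrow> (nat list \<Rightarrow> complex)" where
  "pmpinv I K L J P U Z =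
     ein J K I
       (ein J L K (mpinv L J U)
          (mpinv K L (ein K J L (ein K I J (mpinv I K P) Z) (mpinv L J U))))
       (mpinv I K P)"

end

(* Matricization turns tensors in C^{I x J} into matrices indexed by idx I and idx J, the Einstein
   product into matrix multiplication and the tensor Moore-Penrose inverse into the matrix one, so it
   suffices to prove the statement for matrices r, s, t with a = r s t.
   With the orthogonal projectors E = r^+ r and F = t t^+, the matrix M = r^+ a t^+ equals both
   E (s t t^+) and (r^+ r s) F, hence its Moore-Penrose inverse satisfies M^+ E = M^+ = F M^+.
   The inner matrix of the second product inverse is therefore t (t^+ M^+ r^+) r = F M^+ E = M^+,
   whose Moore-Penrose inverse is M, and r M t = (r r^+ r) s (t t^+ t) = a.
   Moore-Penrose inverses over finite index sets are constructed from scratch: Gram-Schmidt yields,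
   column by column, the orthogonal projector A W onto the column space of A, hence a {1,3}-inverse;
   a {1,3}-inverse X and a {1,4}-inverse Y combine to A^+ = Y A X (Urquhart). *)

theory Submission
  imports Defs
begin

definition mat_mult :: "'b set \<Rightarrow> ('a \<Rightarrow> 'b \<Rightarrow> complex) \<Rightarrow> ('b \<Rightarrow> 'c \<Rightarrow> complex) \<Rightarrow> 'a \<Rightarrow> 'c \<Rightarrow> complex"
  where "mat_mult K A B = (\<lambda>i j. \<Sum>k\<in>K. A i k * B k j)"

definition adjoint :: "('a \<Rightarrow> 'b \<Rightarrow> complex) \<Rightarrow> 'b \<Rightarrow> 'a \<Rightarrow> complex"
  where "adjoint A = (\<lambda>j i. cnj (A i j))"

definition supported :: "'a set \<Rightarrow> 'b set \<Rightarrow> ('a \<Rightarrow> 'b \<Rightarrow> complex) \<Rightarrow> bool"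
  where "supported S T A \<longleftrightarrow> (\<forall>i j. i \<notin> S \<or> j \<notin> T \<longrightarrow> A i j = 0)"

definition mat_vec :: "'b set \<Rightarrow> ('a \<Rightarrow> 'b \<Rightarrow> complex) \<Rightarrow> ('b \<Rightarrow> complex) \<Rightarrow> 'a \<Rightarrow> complex"
  where "mat_vec K M v = (\<lambda>i. \<Sum>k\<in>K. M i k * v k)"

definition cinner :: "'a set \<Rightarrow> ('a \<Rightarrow> complex) \<Rightarrow> ('a \<Rightarrow> complex) \<Rightarrow> complex"
  where "cinner S u v = (\<Sum>k\<in>S. cnj (u k) * v k)"

lemma mat_mult_assoc: "mat_mult L (mat_mult K A B) C = mat_mult K A (mat_mult L B C)"
  unfolding mat_mult_def
  by (auto simp: sum_distrib_left sum_distrib_right mult.assoc intro!: ext sum.swap)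

lemma adjoint_mat_mult: "adjoint (mat_mult K A B) = mat_mult K (adjoint B) (adjoint A)"
  unfolding mat_mult_def adjoint_def by (auto simp: cnj_sum mult.commute intro!: ext)

lemma adjoint_adjoint [simp]: "adjoint (adjoint A) = A"
  unfolding adjoint_def by simp

lemma hermitian_cnj: "adjoint P = P \<Longrightarrow> cnj (P i j) = P j i"
  unfolding adjoint_def by (metis complex_cnj_cnj)

lemma supported_mat_mult: "supported S K A \<Longrightarrow> supported K T B \<Longrightarrow> supported S T (mat_mult K A B)"
  unfolding supported_def mat_mult_def by auto

lemma supported_adjoint: "supported S T A \<Longrightarrow> supported T S (adjoint A)"
  unfolding supported_def adjoint_def by auto

lemma mat_vec_mat_vec: "mat_vec S M (mat_vec K N v) = mat_vec K (mat_mult S M N) v"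
  unfolding mat_vec_def mat_mult_def
  by (auto simp: sum_distrib_left sum_distrib_right mult.assoc intro!: ext sum.swap)

lemma mat_vec_diff: "mat_vec S M (\<lambda>i. u i - v i) = (\<lambda>i. mat_vec S M u i - mat_vec S M v i)"
  unfolding mat_vec_def by (auto simp: right_diff_distrib sum_subtractf)

lemma cinner_diff_left: "cinner S (\<lambda>i. u i - v i) w = cinner S u w - cinner S v w"
  unfolding cinner_def by (auto simp: left_diff_distrib sum_subtractf)

lemma cinner_add_right: "cinner S w (\<lambda>i. u i + v i) = cinner S w u + cinner S w v"
  unfolding cinner_def by (auto simp: distrib_left sum.distrib)

lemma cnj_cinner_self: "cnj (cinner S c c) = cinner S c c"
  by (simp add: cinner_def cnj_sum mult.commute)

lemma cinner_hermitian:
  assumes "adjoint P = P"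
  shows "cinner S (mat_vec S P u) v = cinner S u (mat_vec S P v)"
proof -
  have "cinner S (mat_vec S P u) v = (\<Sum>k\<in>S. \<Sum>l\<in>S. cnj (P k l) * cnj (u l) * v k)"
    by (simp add: cinner_def mat_vec_def cnj_sum sum_distrib_right mult.assoc)
  also have "\<dots> = (\<Sum>l\<in>S. \<Sum>k\<in>S. cnj (P k l) * cnj (u l) * v k)"
    by (rule sum.swap)
  also have "\<dots> = cinner S u (mat_vec S P v)"
    by (simp add: cinner_def mat_vec_def hermitian_cnj[OF assms] sum_distrib_left
        mult.assoc mult.left_commute)
  finally show ?thesis .
qed

lemma cinner_self_eq_0:
  assumes "finite S" "cinner S c c = 0" "k \<in> S"
  shows "c k = 0"
proof -
  have "cinner S c c = of_real (\<Sum>k\<in>S. (cmod (c k))\<^sup>2)"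
    unfolding cinner_def of_real_sum
    by (rule sum.cong) (auto simp: complex_norm_square[symmetric] mult.commute)
  with assms(2) have "(\<Sum>k\<in>S. (cmod (c k))\<^sup>2) = 0"
    by (metis of_real_eq_0_iff)
  with assms(1,3) show ?thesis
    by (simp add: sum_nonneg_eq_0_iff)
qed

lemma rank_one_update_projector:
  fixes P :: "'a \<Rightarrow> 'a \<Rightarrow> complex"
  assumes herm: "adjoint P = P" and idem: "mat_mult S P P = P"
    and fixes_u: "\<forall>j\<in>Y. mat_vec S P (u j) = u j"
    and residual: "c = (\<lambda>i. a i - mat_vec S P a i)"
    and nonzero: "cinner S c c \<noteq> 0"
  defines "P' \<equiv> \<lambda>i i'. P i i' + c i * cnj (c i') / cinner S c c"
  shows "adjoint P' = P'" and "mat_vec S P' a = a" and "\<forall>j\<in>Y. mat_vec S P' (u j) = u j"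
proof -
  let ?n = "cinner S c c"
  have "mat_vec S P c = (\<lambda>i. mat_vec S P a i - mat_vec S (mat_mult S P P) a i)"
    unfolding residual mat_vec_diff mat_vec_mat_vec ..
  then have P_c: "mat_vec S P c = (\<lambda>_. 0)"
    by (simp add: idem)
  have c_orth: "cinner S c (u j) = 0" if "j \<in> Y" for j
    using fixes_u that
    by (simp add: residual cinner_diff_left cinner_hermitian[OF herm])
  have "a = (\<lambda>i. c i + mat_vec S P a i)"
    by (simp add: residual)
  then have "cinner S c a = cinner S c (\<lambda>i. c i + mat_vec S P a i)"
    by (rule arg_cong)
  also have "\<dots> = ?n + cinner S (mat_vec S P c) a"
    by (simp only: cinner_add_right cinner_hermitian[OF herm])
  also have "cinner S (mat_vec S P c) a = 0"
    by (simp add: P_c cinner_def)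
  finally have c_a: "cinner S c a = ?n"
    by simp
  have P'_apply: "mat_vec S P' v = (\<lambda>i. mat_vec S P v i + c i * (cinner S c v / ?n))" for v
    by (auto simp: mat_vec_def P'_def cinner_def distrib_right sum.distrib sum_distrib_left
        sum_divide_distrib mult.assoc mult.left_commute intro!: ext)
  show "adjoint P' = P'"
    using hermitian_cnj[OF herm] cnj_cinner_self[of S c]
    by (auto simp: adjoint_def P'_def mult.commute intro!: ext)
  have "mat_vec S P' a = (\<lambda>i. mat_vec S P a i + c i)"
    using c_a nonzero by (simp add: P'_apply)
  then show "mat_vec S P' a = a"
    by (simp add: residual)
  show "\<forall>j\<in>Y. mat_vec S P' (u j) = u j"
    using fixes_u c_orth by (simp add: P'_apply)
qed

lemma mat_mult_rank_one_update:
  "mat_mult K A (\<lambda>j i'. W j i' + e j * d i') = (\<lambda>i i'. mat_mult K A W i i' + mat_vec K A e i * d i')"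
  by (auto simp: mat_mult_def mat_vec_def distrib_left sum.distrib sum_distrib_right
      mult.assoc intro!: ext)

lemma column_projector_idem:
  assumes "\<forall>j\<in>Y. mat_vec S (mat_mult Y A W) (\<lambda>i. A i j) = (\<lambda>i. A i j)"
  shows "mat_mult S (mat_mult Y A W) (mat_mult Y A W) = mat_mult Y A W"
proof -
  define P where "P = mat_mult Y A W"
  have "mat_mult S P A i j = A i j" if "j \<in> Y" for i j
    using assms that by (metis P_def mat_mult_def mat_vec_def)
  then have "mat_mult Y (mat_mult S P A) W = P"
    unfolding P_def mat_mult_def[of Y] by (auto intro!: ext sum.cong)
  then show ?thesis
    by (simp add: P_def mat_mult_assoc)
qed

lemma mat_mult_insert_residual:
  fixes A :: "'a \<Rightarrow> 'b \<Rightarrow> complex" and W :: "'b \<Rightarrow> 'a \<Rightarrow> complex" and S :: "'a set"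
  assumes "finite Y" "y \<notin> Y"
  defines "e \<equiv> \<lambda>j. if j = y then 1 else - mat_vec S W (\<lambda>i. A i y) j"
  shows "mat_mult (insert y Y) A (\<lambda>j i'. (W(y := (\<lambda>_. 0))) j i' + e j * d i') =
    (\<lambda>i i'. mat_mult Y A W i i' + (A i y - mat_vec S (mat_mult Y A W) (\<lambda>i. A i y) i) * d i')"
proof -
  have "(\<Sum>k\<in>Y. A i k * e k) = (\<Sum>k\<in>Y. - (A i k * mat_vec S W (\<lambda>i. A i y) k))" for i
    using assms(2) by (intro sum.cong) (auto simp: e_def)
  then have "mat_vec (insert y Y) A e = (\<lambda>i. A i y - mat_vec Y A (mat_vec S W (\<lambda>i. A i y)) i)"
    using assms(1,2) by (simp add: mat_vec_def e_def sum_negf)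
  moreover have "mat_mult (insert y Y) A (W(y := (\<lambda>_. 0))) = mat_mult Y A W"
    using assms(1,2) by (auto simp: mat_mult_def intro!: ext sum.cong)
  ultimately show ?thesis
    unfolding mat_mult_rank_one_update mat_vec_mat_vec by (simp only:)
qed

lemma column_projector_insert:
  fixes A :: "'a \<Rightarrow> 'b \<Rightarrow> complex"
  assumes "finite S" "finite Y" "y \<notin> Y" and rows: "\<forall>i j. i \<notin> S \<longrightarrow> A i j = 0"
    and herm: "adjoint (mat_mult Y A W) = mat_mult Y A W"
    and fixes_cols: "\<forall>j\<in>Y. mat_vec S (mat_mult Y A W) (\<lambda>i. A i j) = (\<lambda>i. A i j)"
  shows "\<exists>W'. adjoint (mat_mult (insert y Y) A W') = mat_mult (insert y Y) A W' \<and>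
    (\<forall>j\<in>insert y Y. mat_vec S (mat_mult (insert y Y) A W') (\<lambda>i. A i j) = (\<lambda>i. A i j))"
proof -
  define P where "P = mat_mult Y A W"
  define a where "a = (\<lambda>i. A i y)"
  define c where "c = (\<lambda>i. a i - mat_vec S P a i)"
  define W' where "W' = (\<lambda>j i'. (W(y := (\<lambda>_. 0))) j i' +
    (if j = y then 1 else - mat_vec S W (\<lambda>i. A i y) j) * (cnj (c i') / cinner S c c))"
  have W'_repr: "mat_mult (insert y Y) A W' = (\<lambda>i i'. P i i' + c i * cnj (c i') / cinner S c c)"
    using mat_mult_insert_residual[OF assms(2,3), where A = A and W = W and S = S
        and d = "\<lambda>i'. cnj (c i') / cinner S c c"]
    by (simp add: W'_def P_def c_def a_def)
  \<comment> \<open>If c = 0, the update term vanishes by the convention x / 0 = 0, so W' works in both cases.\<close>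
  show ?thesis
  proof (cases "cinner S c c = 0")
    case True
    have "c i = 0" for i
    proof (cases "i \<in> S")
      case True
      then show ?thesis
        using cinner_self_eq_0[OF \<open>finite S\<close> \<open>cinner S c c = 0\<close>] by blast
    next
      case False
      then show ?thesis
        using rows by (simp add: c_def a_def P_def mat_vec_def mat_mult_def)
    qed
    then have "mat_mult (insert y Y) A W' = P" and "mat_vec S P a = a"
      by (simp_all add: W'_repr c_def fun_eq_iff)
    then show ?thesis
      using herm fixes_cols unfolding P_def a_def by (auto intro!: exI[of _ W'])
  next
    case False
    note update = rank_one_update_projector[OF herm[folded P_def]
        column_projector_idem[OF fixes_cols, folded P_def] fixes_cols[folded P_def] c_def False]
    have herm': "adjoint (mat_mult (insert y Y) A W') = mat_mult (insert y Y) A W'"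
      unfolding W'_repr by (rule update(1))
    have fixes_cols':
      "\<forall>j\<in>insert y Y. mat_vec S (mat_mult (insert y Y) A W') (\<lambda>i. A i j) = (\<lambda>i. A i j)"
      unfolding W'_repr using update(2,3) unfolding a_def by blast
    show ?thesis
      using herm' fixes_cols' by (intro exI[of _ W'] conjI)
  qed
qed

lemma exists_column_projector:
  fixes A :: "'a \<Rightarrow> 'b \<Rightarrow> complex"
  assumes "finite S" "finite Y" "\<forall>i j. i \<notin> S \<longrightarrow> A i j = 0"
  shows "\<exists>W. adjoint (mat_mult Y A W) = mat_mult Y A W \<and>
    (\<forall>j\<in>Y. mat_vec S (mat_mult Y A W) (\<lambda>i. A i j) = (\<lambda>i. A i j))"
  using assms(2)
proof (induction Y rule: finite_induct)
  case empty
  show ?case by (auto simp: mat_mult_def adjoint_def)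
next
  case (insert y Y)
  then show ?case
    using column_projector_insert[OF assms(1) insert(1,2) assms(3)] by blast
qed

lemma exists_13_inverse:
  fixes A :: "'a \<Rightarrow> 'b \<Rightarrow> complex"
  assumes "finite S" "finite T" and A: "supported S T A"
  shows "\<exists>X. supported T S X \<and> mat_mult S (mat_mult T A X) A = A \<and>
    adjoint (mat_mult T A X) = mat_mult T A X"
proof -
  have rows: "\<forall>i j. i \<notin> S \<longrightarrow> A i j = 0"
    using A by (simp add: supported_def)
  obtain W where herm: "adjoint (mat_mult T A W) = mat_mult T A W"
    and fixes_cols: "\<forall>j\<in>T. mat_vec S (mat_mult T A W) (\<lambda>i. A i j) = (\<lambda>i. A i j)"
    using exists_column_projector[OF assms(1,2) rows] by blast
  define P where "P = mat_mult T A W"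
  define X where "X = (\<lambda>j i. if j \<in> T \<and> i \<in> S then W j i else 0)"
  have P_cols: "P i k = 0" if "k \<notin> S" for i k
    using hermitian_cnj[OF herm, of k i] rows that by (simp add: P_def mat_mult_def)
  have "mat_mult T A X i j = P i j" for i j
    using P_cols[of j i] by (cases "j \<in> S") (simp_all add: P_def mat_mult_def X_def)
  then have "mat_mult T A X = P"
    by (intro ext)
  moreover have "mat_mult S P A = A"
  proof (intro ext)
    fix i j
    show "mat_mult S P A i j = A i j"
      using fixes_cols A unfolding P_def
      by (cases "j \<in> T") (auto simp: mat_mult_def mat_vec_def supported_def fun_eq_iff)
  qed
  moreover have "supported T S X"
    by (simp add: supported_def X_def)
  ultimately show ?thesis
    using herm by (auto simp: P_def)
qed

definition penrose_inverse :: "'a set \<Rightarrow> 'b set \<Rightarrow> ('a \<Rightarrow> 'b \<Rightarrow> complex) \<Rightarrow> ('b \<Rightarrow> 'a \<Rightarrow> complex) \<Rightarrow> bool"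
  where "penrose_inverse S T A G \<longleftrightarrow> supported T S G \<and>
    mat_mult S (mat_mult T A G) A = A \<and> mat_mult T (mat_mult S G A) G = G \<and>
    adjoint (mat_mult T A G) = mat_mult T A G \<and> adjoint (mat_mult S G A) = mat_mult S G A"

lemma penrose_inverse_of_13_14_inverses:
  assumes A: "supported S T A" and X: "supported T S X" and Y: "supported T S Y"
    and AXA: "mat_mult S (mat_mult T A X) A = A" and AX: "adjoint (mat_mult T A X) = mat_mult T A X"
    and AYA: "mat_mult S (mat_mult T A Y) A = A" and YA: "adjoint (mat_mult S Y A) = mat_mult S Y A"
  shows "penrose_inverse S T A (mat_mult T (mat_mult S Y A) X)"
proof -
  define G where "G = mat_mult T (mat_mult S Y A) X"
  have AG: "mat_mult T A G = mat_mult T A X"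
  proof -
    have "mat_mult T A G = mat_mult T (mat_mult S (mat_mult T A Y) A) X"
      by (simp add: G_def mat_mult_assoc)
    then show ?thesis
      by (simp add: AYA)
  qed
  have GA: "mat_mult S G A = mat_mult S Y A"
  proof -
    have "mat_mult S G A = mat_mult S Y (mat_mult S (mat_mult T A X) A)"
      by (simp add: G_def mat_mult_assoc)
    then show ?thesis
      by (simp add: AXA)
  qed
  have "mat_mult T (mat_mult S G A) G = mat_mult T (mat_mult S Y A) (mat_mult T (mat_mult S Y A) X)"
    unfolding GA by (simp only: G_def)
  also have "\<dots> = mat_mult T (mat_mult S Y (mat_mult S (mat_mult T A Y) A)) X"
    by (simp only: mat_mult_assoc)
  finally have GAG: "mat_mult T (mat_mult S G A) G = G"
    by (simp only: AYA G_def)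
  have "supported T S G"
    unfolding G_def by (intro supported_mat_mult Y A X)
  then show ?thesis
    unfolding penrose_inverse_def G_def[symmetric] using AG GA GAG AXA AX YA by simp
qed

lemma penrose_inverse_exists:
  fixes A :: "'a \<Rightarrow> 'b \<Rightarrow> complex"
  assumes "finite S" "finite T" and A: "supported S T A"
  shows "\<exists>G. penrose_inverse S T A G"
proof -
  obtain X where X: "supported T S X" "mat_mult S (mat_mult T A X) A = A"
      "adjoint (mat_mult T A X) = mat_mult T A X"
    using exists_13_inverse[OF assms] by blast
  obtain Z where Z: "supported S T Z" "mat_mult T (mat_mult S (adjoint A) Z) (adjoint A) = adjoint A"
      "adjoint (mat_mult S (adjoint A) Z) = mat_mult S (adjoint A) Z"
    using exists_13_inverse[OF assms(2,1) supported_adjoint[OF A]] by blast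
  have "adjoint (mat_mult T (mat_mult S (adjoint A) Z) (adjoint A)) = A"
    using Z(2) by simp
  then have "mat_mult S (mat_mult T A (adjoint Z)) A = A"
    by (simp add: adjoint_mat_mult mat_mult_assoc)
  moreover have "adjoint (mat_mult S (adjoint Z) A) = mat_mult S (adjoint Z) A"
    using Z(3) by (metis adjoint_adjoint adjoint_mat_mult)
  ultimately show ?thesis
    using penrose_inverse_of_13_14_inverses[OF A X(1) supported_adjoint[OF Z(1)] X(2,3)] by blast
qed

lemma penrose_inverse_unique:
  assumes G1: "penrose_inverse S T A G1" and G2: "penrose_inverse S T A G2"
  shows "G1 = G2"
proof -
  have A1: "mat_mult S (mat_mult T A G1) A = A"
    and herm_AG1: "adjoint (mat_mult T A G1) = mat_mult T A G1"
    and herm_G1A: "adjoint (mat_mult S G1 A) = mat_mult S G1 A"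
    and G1G1: "mat_mult T (mat_mult S G1 A) G1 = G1"
    using G1 unfolding penrose_inverse_def by auto
  have A2: "mat_mult S (mat_mult T A G2) A = A"
    and herm_AG2: "adjoint (mat_mult T A G2) = mat_mult T A G2"
    and herm_G2A: "adjoint (mat_mult S G2 A) = mat_mult S G2 A"
    and G2G2: "mat_mult T (mat_mult S G2 A) G2 = G2"
    using G2 unfolding penrose_inverse_def by auto
  have AG: "mat_mult T A G1 = mat_mult T A G2"
  proof -
    have "mat_mult T A G1 = adjoint (mat_mult T A G1)"
      using herm_AG1 by (rule sym)
    also have "\<dots> = mat_mult T (adjoint G1) (adjoint (mat_mult S (mat_mult T A G2) A))"
      by (simp only: A2 adjoint_mat_mult)
    also have "\<dots> = mat_mult S (adjoint (mat_mult T A G1)) (adjoint (mat_mult T A G2))"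
      by (simp only: adjoint_mat_mult mat_mult_assoc)
    also have "\<dots> = mat_mult T (mat_mult S (mat_mult T A G1) A) G2"
      by (simp only: herm_AG1 herm_AG2 mat_mult_assoc)
    finally show ?thesis
      by (simp only: A1)
  qed
  have GA: "mat_mult S G1 A = mat_mult S G2 A"
  proof -
    have "mat_mult S G1 A = adjoint (mat_mult S G1 A)"
      using herm_G1A by (rule sym)
    also have "\<dots> = mat_mult S (adjoint (mat_mult S (mat_mult T A G2) A)) (adjoint G1)"
      by (simp only: A2 adjoint_mat_mult)
    also have "\<dots> = mat_mult T (adjoint (mat_mult S G2 A)) (adjoint (mat_mult S G1 A))"
      by (simp only: adjoint_mat_mult mat_mult_assoc)
    also have "\<dots> = mat_mult S G2 (mat_mult S (mat_mult T A G1) A)"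
      by (simp only: herm_G1A herm_G2A mat_mult_assoc)
    finally show ?thesis
      by (simp only: A1)
  qed
  have "G1 = mat_mult T (mat_mult S G1 A) G1"
    using G1G1 by (rule sym)
  also have "\<dots> = mat_mult S G2 (mat_mult T A G1)"
    by (simp only: GA mat_mult_assoc)
  also have "\<dots> = mat_mult T (mat_mult S G2 A) G2"
    by (simp only: AG mat_mult_assoc)
  finally show ?thesis
    by (simp only: G2G2)
qed

definition pinv :: "'a set \<Rightarrow> 'b set \<Rightarrow> ('a \<Rightarrow> 'b \<Rightarrow> complex) \<Rightarrow> 'b \<Rightarrow> 'a \<Rightarrow> complex"
  where "pinv S T A = (THE G. penrose_inverse S T A G)"

lemma pinv_eqI: "penrose_inverse S T A G \<Longrightarrow> pinv S T A = G"
  unfolding pinv_def by (rule the_equality) (auto intro: penrose_inverse_unique)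

lemma penrose_inverse_pinv:
  "finite S \<Longrightarrow> finite T \<Longrightarrow> supported S T A \<Longrightarrow> penrose_inverse S T A (pinv S T A)"
  using penrose_inverse_exists pinv_eqI by metis

lemma penrose_inverse_swap: "penrose_inverse S T A G \<Longrightarrow> supported S T A \<Longrightarrow> penrose_inverse T S G A"
  unfolding penrose_inverse_def by auto

lemma pinv_pinv: "finite S \<Longrightarrow> finite T \<Longrightarrow> supported S T A \<Longrightarrow> pinv T S (pinv S T A) = A"
  by (rule pinv_eqI, rule penrose_inverse_swap) (simp_all add: penrose_inverse_pinv)

lemma penrose_inverse_projectors:
  assumes "penrose_inverse S T A G"
  shows "mat_mult S (mat_mult T A G) (mat_mult T A G) = mat_mult T A G"
    and "mat_mult T (mat_mult S G A) (mat_mult S G A) = mat_mult S G A"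
proof -
  have AGA: "mat_mult S (mat_mult T A G) A = A" and GAG: "mat_mult T (mat_mult S G A) G = G"
    using assms unfolding penrose_inverse_def by auto
  have "mat_mult S (mat_mult T A G) (mat_mult T A G) = mat_mult T (mat_mult S (mat_mult T A G) A) G"
    by (simp only: mat_mult_assoc)
  then show "mat_mult S (mat_mult T A G) (mat_mult T A G) = mat_mult T A G"
    by (simp only: AGA)
  have "mat_mult T (mat_mult S G A) (mat_mult S G A) = mat_mult S (mat_mult T (mat_mult S G A) G) A"
    by (simp only: mat_mult_assoc)
  then show "mat_mult T (mat_mult S G A) (mat_mult S G A) = mat_mult S G A"
    by (simp only: GAG)
qed

lemma penrose_inverse_mult_projector:
  assumes G: "penrose_inverse S T M G" and M: "M = mat_mult S E K"
    and EE: "mat_mult S E E = E" and E: "adjoint E = E"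
  shows "mat_mult S G E = G"
proof -
  have GMG: "mat_mult T (mat_mult S G M) G = G" and MG: "adjoint (mat_mult T M G) = mat_mult T M G"
    using G unfolding penrose_inverse_def by auto
  have ME: "mat_mult S (adjoint M) E = adjoint M"
    by (simp only: M adjoint_mat_mult E mat_mult_assoc EE)
  have "G = mat_mult S G (mat_mult T M G)"
    using GMG by (simp only: mat_mult_assoc)
  also have "\<dots> = mat_mult S G (adjoint (mat_mult T M G))"
    by (simp only: MG)
  also have "\<dots> = mat_mult T (mat_mult S G (adjoint G)) (adjoint M)"
    by (simp only: adjoint_mat_mult mat_mult_assoc)
  finally have G_eq: "G = mat_mult T (mat_mult S G (adjoint G)) (adjoint M)" .
  also have "\<dots> = mat_mult T (mat_mult S G (adjoint G)) (mat_mult S (adjoint M) E)"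
    by (simp only: ME)
  also have "\<dots> = mat_mult S (mat_mult T (mat_mult S G (adjoint G)) (adjoint M)) E"
    by (simp only: mat_mult_assoc)
  also have "\<dots> = mat_mult S G E"
    by (simp only: G_eq[symmetric])
  finally show ?thesis
    by (rule sym)
qed

lemma projector_mult_penrose_inverse:
  assumes G: "penrose_inverse S T M G" and M: "M = mat_mult T K F"
    and FF: "mat_mult T F F = F" and F: "adjoint F = F"
  shows "mat_mult T F G = G"
proof -
  have GMG: "mat_mult T (mat_mult S G M) G = G" and GM: "adjoint (mat_mult S G M) = mat_mult S G M"
    using G unfolding penrose_inverse_def by auto
  have FM: "mat_mult T F (adjoint M) = adjoint M"
    by (simp only: M adjoint_mat_mult F mat_mult_assoc[symmetric] FF)
  have "G = mat_mult T (mat_mult S G M) G"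
    using GMG by (rule sym)
  also have "\<dots> = mat_mult T (adjoint (mat_mult S G M)) G"
    by (simp only: GM)
  also have "\<dots> = mat_mult S (adjoint M) (mat_mult T (adjoint G) G)"
    by (simp only: adjoint_mat_mult mat_mult_assoc)
  finally have G_eq: "G = mat_mult S (adjoint M) (mat_mult T (adjoint G) G)" .
  also have "\<dots> = mat_mult S (mat_mult T F (adjoint M)) (mat_mult T (adjoint G) G)"
    by (simp only: FM)
  also have "\<dots> = mat_mult T F (mat_mult S (adjoint M) (mat_mult T (adjoint G) G))"
    by (simp only: mat_mult_assoc)
  also have "\<dots> = mat_mult T F G"
    by (simp only: G_eq[symmetric])
  finally show ?thesis
    by (rule sym)
qed

definition prod_pinv :: "'i set \<Rightarrow> 'k set \<Rightarrow> 'l set \<Rightarrow> 'j set \<Rightarrow> ('i \<Rightarrow> 'k \<Rightarrow> complex) \<Rightarrow>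
    ('l \<Rightarrow> 'j \<Rightarrow> complex) \<Rightarrow> ('i \<Rightarrow> 'j \<Rightarrow> complex) \<Rightarrow> 'j \<Rightarrow> 'i \<Rightarrow> complex"
  where "prod_pinv I K L J P U Z =
    mat_mult K (mat_mult L (pinv L J U) (pinv K L (mat_mult J (mat_mult I (pinv I K P) Z) (pinv L J U))))
      (pinv I K P)"

lemma penrose_inverse_compression_sandwich:
  assumes r': "penrose_inverse I H r r'" and t': "penrose_inverse G J t t'"
    and M': "penrose_inverse H G M M'"
    and M: "M = mat_mult J (mat_mult I r' (mat_mult G (mat_mult H r s) t)) t'"
  shows "mat_mult I (mat_mult J t (mat_mult H (mat_mult G t' M') r')) r = M'"
proof -
  have "mat_mult H M' (mat_mult I r' r) = M'"
  proof (rule penrose_inverse_mult_projector[OF M'])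
    show "M = mat_mult H (mat_mult I r' r) (mat_mult J (mat_mult G s t) t')"
      by (simp add: M mat_mult_assoc)
  qed (use r' penrose_inverse_projectors(2)[OF r'] in \<open>auto simp: penrose_inverse_def\<close>)
  moreover have "mat_mult G (mat_mult J t t') M' = M'"
  proof (rule projector_mult_penrose_inverse[OF M'])
    show "M = mat_mult G (mat_mult H (mat_mult I r' r) s) (mat_mult J t t')"
      by (simp add: M mat_mult_assoc)
  qed (use t' penrose_inverse_projectors(1)[OF t'] in \<open>auto simp: penrose_inverse_def\<close>)
  ultimately show ?thesis
    by (simp only: mat_mult_assoc[symmetric])
qed

lemma prod_pinv_prod_pinv:
  fixes r :: "'i \<Rightarrow> 'h \<Rightarrow> complex" and s :: "'h \<Rightarrow> 'g \<Rightarrow> complex" and t :: "'g \<Rightarrow> 'j \<Rightarrow> complex"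
  assumes fin: "finite I" "finite H" "finite G" "finite J"
    and r: "supported I H r" and s: "supported H G s" and t: "supported G J t"
    and a: "a = mat_mult G (mat_mult H r s) t"
  shows "prod_pinv J G H I (pinv G J t) (pinv I H r) (prod_pinv I H G J r t a) = a"
proof -
  define r' where "r' = pinv I H r"
  define t' where "t' = pinv G J t"
  define M where "M = mat_mult J (mat_mult I r' a) t'"
  define M' where "M' = pinv H G M"
  have r': "penrose_inverse I H r r'"
    unfolding r'_def by (rule penrose_inverse_pinv[OF fin(1,2) r])
  have t': "penrose_inverse G J t t'"
    unfolding t'_def by (rule penrose_inverse_pinv[OF fin(3,4) t])
  have M_supp: "supported H G M"
    using r' t' unfolding M_def a penrose_inverse_def by (intro supported_mat_mult r s t) auto
  then have M': "penrose_inverse H G M M'"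
    unfolding M'_def by (rule penrose_inverse_pinv[OF fin(2,3)])
  have "prod_pinv I H G J r t a = mat_mult H (mat_mult G t' M') r'"
    by (simp add: prod_pinv_def r'_def t'_def M'_def M_def)
  then have inner: "mat_mult I (mat_mult J t (prod_pinv I H G J r t a)) r = M'"
    using penrose_inverse_compression_sandwich[OF r' t' M'] by (simp add: M_def a)
  have "pinv H I r' = r" and "pinv J G t' = t" and "pinv G H M' = M"
    unfolding r'_def t'_def M'_def using fin r t M_supp by (simp_all add: pinv_pinv)
  then have "prod_pinv J G H I t' r' (prod_pinv I H G J r t a) = mat_mult G (mat_mult H r M) t"
    unfolding prod_pinv_def[of J G H I t' r'] by (simp only: inner)
  also have "\<dots> = mat_mult G (mat_mult H (mat_mult I (mat_mult H r r') r) s) (mat_mult G (mat_mult J t t') t)"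
    by (simp add: M_def a mat_mult_assoc)
  also have "\<dots> = a"
    using r' t' by (simp add: a penrose_inverse_def)
  finally show ?thesis
    by (simp add: r'_def t'_def)
qed

lemma idx_iff_list_all2: "x \<in> idx D \<longleftrightarrow> list_all2 (<) x D"
  by (auto simp: idx_def list_all2_conv_all_nth)

lemma idx_append:
  "x \<in> idx (I @ J) \<longleftrightarrow> take (length I) x \<in> idx I \<and> drop (length I) x \<in> idx J"
  unfolding idx_iff_list_all2 list_all2_append2
  by (metis append_eq_conv_conj list_all2_lengthD)

lemma append_in_idx: "i \<in> idx I \<Longrightarrow> j \<in> idx J \<Longrightarrow> i @ j \<in> idx (I @ J)"
  by (simp add: idx_iff_list_all2 list_all2_appendI)

lemma length_idx: "i \<in> idx I \<Longrightarrow> length i = length I"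
  by (simp add: idx_def)

lemma finite_idx: "finite (idx D)"
proof -
  have "idx D \<subseteq> {x. set x \<subseteq> {..<Max (insert 0 (set D))} \<and> length x = length D}"
    by (fastforce simp: idx_def in_set_conv_nth intro: less_le_trans[OF _ Max_ge])
  then show ?thesis
    by (rule finite_subset) (simp add: finite_lists_length_eq)
qed

definition matricize :: "nat list \<Rightarrow> nat list \<Rightarrow> (nat list \<Rightarrow> complex) \<Rightarrow> nat list \<Rightarrow> nat list \<Rightarrow> complex"
  where "matricize I J A = (\<lambda>i j. if i \<in> idx I \<and> j \<in> idx J then A (i @ j) else 0)"

definition tensorize :: "nat list \<Rightarrow> nat list \<Rightarrow> (nat list \<Rightarrow> nat list \<Rightarrow> complex) \<Rightarrow> nat list \<Rightarrow> complex"
  where "tensorize I J M =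
    (\<lambda>x. if x \<in> idx (I @ J) then M (take (length I) x) (drop (length I) x) else 0)"

lemma supported_matricize: "supported (idx I) (idx J) (matricize I J A)"
  by (simp add: supported_def matricize_def)

lemma matricize_tensorize: "supported (idx I) (idx J) M \<Longrightarrow> matricize I J (tensorize I J M) = M"
  by (auto simp: matricize_def tensorize_def supported_def append_in_idx length_idx intro!: ext)

lemma tensorize_matricize: "A \<in> tens (I @ J) \<Longrightarrow> tensorize I J (matricize I J A) = A"
  by (auto simp: matricize_def tensorize_def tens_def idx_append intro!: ext)

lemma tensorize_in_tens: "tensorize I J M \<in> tens (I @ J)"
  by (simp add: tensorize_def tens_def)

lemma matricize_inject:
  "A \<in> tens (I @ J) \<Longrightarrow> B \<in> tens (I @ J) \<Longrightarrow> matricize I J A = matricize I J B \<longleftrightarrow> A = B"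
  by (metis tensorize_matricize)

lemma ein_eq_tensorize: "ein I K J A B = tensorize I J (mat_mult (idx K) (matricize I K A) (matricize K J B))"
  by (auto simp: ein_def tensorize_def mat_mult_def matricize_def idx_append intro!: ext sum.cong)

lemma ctr_eq_tensorize: "ctr I J A = tensorize J I (adjoint (matricize I J A))"
  by (auto simp: ctr_def tensorize_def adjoint_def matricize_def idx_append intro!: ext)

lemma ein_in_tens: "ein I K J A B \<in> tens (I @ J)"
  unfolding ein_eq_tensorize by (rule tensorize_in_tens)

lemma ctr_in_tens: "ctr I J A \<in> tens (J @ I)"
  unfolding ctr_eq_tensorize by (rule tensorize_in_tens)

lemma matricize_ein: "matricize I J (ein I K J A B) = mat_mult (idx K) (matricize I K A) (matricize K J B)"
  unfolding ein_eq_tensorize by (intro matricize_tensorize supported_mat_mult supported_matricize)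

lemma matricize_ctr: "matricize J I (ctr I J A) = adjoint (matricize I J A)"
  unfolding ctr_eq_tensorize by (intro matricize_tensorize supported_adjoint supported_matricize)

lemma is_mpinv_iff_penrose_inverse:
  assumes A: "A \<in> tens (I @ J)" and X: "X \<in> tens (J @ I)"
  shows "is_mpinv I J A X \<longleftrightarrow> penrose_inverse (idx I) (idx J) (matricize I J A) (matricize J I X)"
proof -
  have ein_eq: "ein I L J B C = D \<longleftrightarrow> matricize I J (ein I L J B C) = matricize I J D"
    if "D \<in> tens (I @ J)" for I L J B C D
    using matricize_inject[OF ein_in_tens that] by simp
  have ctr_eq: "ctr I I B = ein I J I C D \<longleftrightarrow>
      matricize I I (ctr I I B) = matricize I I (ein I J I C D)" for I J B C D
    using matricize_inject[OF ctr_in_tens ein_in_tens] by simp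
  show ?thesis
    unfolding is_mpinv_def penrose_inverse_def ein_eq[OF A] ein_eq[OF X] ctr_eq
    using X by (simp add: matricize_ein matricize_ctr supported_matricize)
qed

lemma matricize_mpinv:
  assumes A: "A \<in> tens (I @ J)"
  shows "matricize J I (mpinv I J A) = pinv (idx I) (idx J) (matricize I J A)"
    and "mpinv I J A \<in> tens (J @ I)"
proof -
  let ?G = "pinv (idx I) (idx J) (matricize I J A)"
  have G: "penrose_inverse (idx I) (idx J) (matricize I J A) ?G"
    by (rule penrose_inverse_pinv[OF finite_idx finite_idx supported_matricize])
  then have G_supp: "supported (idx J) (idx I) ?G"
    by (simp add: penrose_inverse_def)
  have "mpinv I J A = tensorize J I ?G"
    unfolding mpinv_def
  proof (rule the_equality)
    show "is_mpinv I J A (tensorize J I ?G)"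
      using G by (simp add: is_mpinv_iff_penrose_inverse[OF A tensorize_in_tens]
          matricize_tensorize[OF G_supp])
  next
    fix X
    assume X: "is_mpinv I J A X"
    then have X_tens: "X \<in> tens (J @ I)"
      by (simp add: is_mpinv_def)
    with X A have "penrose_inverse (idx I) (idx J) (matricize I J A) (matricize J I X)"
      by (simp add: is_mpinv_iff_penrose_inverse)
    then have "?G = matricize J I X"
      by (rule pinv_eqI)
    then show "X = tensorize J I ?G"
      by (simp add: tensorize_matricize[OF X_tens])
  qed
  then show "matricize J I (mpinv I J A) = ?G" and "mpinv I J A \<in> tens (J @ I)"
    by (simp_all add: matricize_tensorize[OF G_supp] tensorize_in_tens)
qed

lemma matricize_pmpinv:
  assumes "P \<in> tens (I @ K)" and "U \<in> tens (L @ J)"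
  shows "matricize J I (pmpinv I K L J P U Z) =
    prod_pinv (idx I) (idx K) (idx L) (idx J) (matricize I K P) (matricize L J U) (matricize I J Z)"
  using assms
  by (simp add: pmpinv_def prod_pinv_def matricize_ein matricize_mpinv ein_in_tens)

theorem theorem3p12:
  fixes I H G J :: "nat list"
    and R S T A :: "nat list \<Rightarrow> complex"
  assumes "\<forall>d\<in>set (I @ H @ G @ J). 0 < d"
    and "R \<in> tens (I @ H)" and "S \<in> tens (H @ G)" and "T \<in> tens (G @ J)"
    and "A = ein I G J (ein I H G R S) T"
  shows "pmpinv J G H I (mpinv G J T) (mpinv I H R) (pmpinv I H G J R T A) = A"
proof -
  have "matricize I J (pmpinv J G H I (mpinv G J T) (mpinv I H R) (pmpinv I H G J R T A)) =
      prod_pinv (idx J) (idx G) (idx H) (idx I)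
        (pinv (idx G) (idx J) (matricize G J T)) (pinv (idx I) (idx H) (matricize I H R))
        (prod_pinv (idx I) (idx H) (idx G) (idx J) (matricize I H R) (matricize G J T) (matricize I J A))"
    using assms(2,4) by (simp add: matricize_pmpinv matricize_mpinv)
  also have "\<dots> = matricize I J A"
  proof (rule prod_pinv_prod_pinv[OF finite_idx finite_idx finite_idx finite_idx
        supported_matricize supported_matricize supported_matricize])
    show "matricize I J A =
        mat_mult (idx G) (mat_mult (idx H) (matricize I H R) (matricize H G S)) (matricize G J T)"
      using assms(5) by (simp add: matricize_ein)
  qed
  finally show ?thesis
    by (simp add: matricize_inject pmpinv_def ein_in_tens assms(5))
qed

end
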